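(* Let $G$ be a graph on $n$ vertices and let $m,k$ be integers with $1\leq m<k\leq n$. If $\psi_k(G)>0$, then $\psi_m(G)\geq \psi_k(G)+\left\lfloor\frac{k}{m}\right\rfloor-1$.
   Context: All graphs are finite, simple and nonempty. For a graph $G$ and a positive integer $k$, a $k$-path vertex cover ($k$-PVC) of $G$ is a set $S$ of vertices such that every path on $k$ vertices in $G$ contains at least one vertex of $S$ (if $G$ has no path on $k$ vertices, the empty set is a $k$-PVC). $\psi_k(G)$ denotes the minimum cardinality of a $k$-PVC of $G$. *)

theory Defs
  imports Main
begin

definition simple_graph :: "'a set \<Rightarrow> ('a \<Rightarrow> 'a \<Rightarrow> bool) \<Rightarrow> bool" where
  "simple_graph V E \<longleftrightarrow> finite V \<and> V \<noteq> {} \<and>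
     (\<forall>u v. E u v \<longrightarrow> u \<in> V \<and> v \<in> V) \<and>
     (\<forall>u v. E u v \<longrightarrow> E v u) \<and> (\<forall>v. \<not> E v v)"

definition is_path :: "'a set \<Rightarrow> ('a \<Rightarrow> 'a \<Rightarrow> bool) \<Rightarrow> 'a list \<Rightarrow> bool" where
  "is_path V E p \<longleftrightarrow> distinct p \<and> set p \<subseteq> V \<and>
     (\<forall>i. Suc i < length p \<longrightarrow> E (p ! i) (p ! Suc i))"

definition is_kpvc :: "'a set \<Rightarrow> ('a \<Rightarrow> 'a \<Rightarrow> bool) \<Rightarrow> nat \<Rightarrow> 'a set \<Rightarrow> bool" where
  "is_kpvc V E k S \<longleftrightarrow> S \<subseteq> V \<and>
     (\<forall>p. is_path V E p \<and> length p = k \<longrightarrow> set p \<inter> S \<noteq> {})"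

definition psi :: "'a set \<Rightarrow> ('a \<Rightarrow> 'a \<Rightarrow> bool) \<Rightarrow> nat \<Rightarrow> nat" where
  "psi V E k = Min (card ` {S. is_kpvc V E k S})"

end

theory Submission
  imports Defs
begin

text \<open>Let S be a minimum m-PVC. It is also a k-PVC, so it contains an inclusion-minimal
k-PVC T, which is nonempty because \<open>\<psi>\<^sub>k > 0\<close>. For \<open>t \<in> T\<close> some path Q on k vertices
avoids \<open>T - {t}\<close>. Cutting Q into \<open>\<lfloor>k/m\<rfloor>\<close> disjoint blocks of m consecutive vertices, each
block meets S, and only inside \<open>(S - T) \<union> {t}\<close>. Hence \<open>\<lfloor>k/m\<rfloor> \<le> |S - T| + 1\<close>, i.e.
\<open>\<psi>\<^sub>m = |S| \<ge> |T| + \<lfloor>k/m\<rfloor> - 1 \<ge> \<psi>\<^sub>k + \<lfloor>k/m\<rfloor> - 1\<close>.\<close>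

lemma is_path_take: "is_path V E p \<Longrightarrow> is_path V E (take l p)"
  unfolding is_path_def by (auto dest: in_set_takeD)

lemma is_path_drop: "is_path V E p \<Longrightarrow> is_path V E (drop l p)"
  unfolding is_path_def by (auto dest: in_set_dropD)

lemma is_kpvc_mono:
  assumes "is_kpvc V E m S" "m \<le> k"
  shows "is_kpvc V E k S"
  unfolding is_kpvc_def
proof (intro conjI allI impI)
  show "S \<subseteq> V" using assms(1) by (simp add: is_kpvc_def)
  fix p assume "is_path V E p \<and> length p = k"
  then have "is_path V E (take m p) \<and> length (take m p) = m"
    using assms(2) by (simp add: is_path_take)
  then have "set (take m p) \<inter> S \<noteq> {}" using assms(1) by (simp add: is_kpvc_def)
  then show "set p \<inter> S \<noteq> {}" by (auto dest: in_set_takeD)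
qed

lemma path_length_div_le_card_inter_kpvc:
  assumes "is_kpvc V E m S" "is_path V E p"
  shows "length p div m \<le> card (set p \<inter> S)"
  using assms(2)
proof (induction "length p" arbitrary: p rule: less_induct)
  case less
  show ?case
  proof (cases "m \<le> length p \<and> 0 < m")
    case False
    then show ?thesis by auto
  next
    case True
    have "set (take m p) \<inter> S \<noteq> {}"
      using assms(1) True is_path_take[OF less.prems] by (simp add: is_kpvc_def)
    then have "1 \<le> card (set (take m p) \<inter> S)" by (simp add: Suc_le_eq card_gt_0_iff)
    moreover have "length p div m - 1 \<le> card (set (drop m p) \<inter> S)"
    proof -
      have "length (drop m p) < length p" using True by auto
      then have "length (drop m p) div m \<le> card (set (drop m p) \<inter> S)"
        using less.hyps is_path_drop[OF less.prems] by blast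
      then show ?thesis using True by (simp add: le_div_geq)
    qed
    moreover have "set (take m p) \<inter> set (drop m p) = {}"
      using less.prems by (simp add: is_path_def set_take_disj_set_drop_if_distinct)
    moreover have "set p \<inter> S = (set (take m p) \<inter> S) \<union> (set (drop m p) \<inter> S)"
      by (metis append_take_drop_id inf_sup_distrib2 set_append)
    ultimately show ?thesis by (simp add: card_Un_disjoint disjoint_iff)
  qed
qed

lemma ex_minimal_kpvc_subset:
  assumes "finite S" "is_kpvc V E k S"
  obtains T where "T \<subseteq> S" "is_kpvc V E k T" "\<And>t. t \<in> T \<Longrightarrow> \<not> is_kpvc V E k (T - {t})"
proof -
  obtain T where T: "T \<subseteq> S" "is_kpvc V E k T"
    and least: "\<And>T'. T' \<subseteq> S \<Longrightarrow> is_kpvc V E k T' \<Longrightarrow> card T \<le> card T'"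
    using ex_has_least_nat[of "\<lambda>T. T \<subseteq> S \<and> is_kpvc V E k T" S card] assms(2) by blast
  have "\<not> is_kpvc V E k (T - {t})" if "t \<in> T" for t
  proof
    assume "is_kpvc V E k (T - {t})"
    then have "card T \<le> card (T - {t})" using T(1) by (intro least) auto
    moreover have "finite T" using T(1) assms(1) finite_subset by blast
    ultimately show False using that card_Diff1_less[of T t] by simp
  qed
  then show thesis using that T by blast
qed

lemma is_kpvc_vertex_set: "1 \<le> k \<Longrightarrow> is_kpvc V E k V"
  unfolding is_kpvc_def is_path_def by (auto simp: Suc_le_eq neq_Nil_conv)

lemma finite_card_kpvc: "finite V \<Longrightarrow> finite (card ` {S. is_kpvc V E k S})"
  by (rule finite_imageI, rule finite_subset[of _ "Pow V"]) (auto simp: is_kpvc_def)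

lemma psi_le_card: "finite V \<Longrightarrow> is_kpvc V E k S \<Longrightarrow> psi V E k \<le> card S"
  unfolding psi_def by (auto intro: Min_le finite_card_kpvc)

lemma ex_minimum_kpvc:
  assumes "finite V" "1 \<le> k"
  obtains S where "is_kpvc V E k S" "card S = psi V E k"
proof -
  have "psi V E k \<in> card ` {S. is_kpvc V E k S}"
    unfolding psi_def using assms is_kpvc_vertex_set finite_card_kpvc by (intro Min_in) auto
  then show thesis using that by auto
qed

theorem mainTheorem5:
  fixes V :: "'a set" and E :: "'a \<Rightarrow> 'a \<Rightarrow> bool" and n m k :: nat
  assumes "simple_graph V E"
    and "card V = n"
    and "1 \<le> m" and "m < k" and "k \<le> n"
    and "psi V E k > 0"
  shows "psi V E m \<ge> psi V E k + k div m - 1"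
proof -
  have "finite V" using assms(1) by (simp add: simple_graph_def)
  obtain S where S: "is_kpvc V E m S" "card S = psi V E m"
    using ex_minimum_kpvc[OF \<open>finite V\<close> assms(3)] .
  have "finite S" using S(1) \<open>finite V\<close> by (meson is_kpvc_def rev_finite_subset)
  obtain T where T: "T \<subseteq> S" "is_kpvc V E k T" "\<And>t. t \<in> T \<Longrightarrow> \<not> is_kpvc V E k (T - {t})"
    using ex_minimal_kpvc_subset[OF \<open>finite S\<close> is_kpvc_mono[OF S(1) less_imp_le[OF assms(4)]]] by blast
  have "psi V E k \<le> card T" using psi_le_card[OF \<open>finite V\<close> T(2)] .
  then obtain t where "t \<in> T" using assms(6) by fastforce
  then obtain p where p: "is_path V E p" "length p = k" "set p \<inter> (T - {t}) = {}"
    using T(2,3) unfolding is_kpvc_def by blast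
  have "k div m \<le> card (set p \<inter> S)" using path_length_div_le_card_inter_kpvc[OF S(1) p(1)] p(2) by simp
  also have "\<dots> \<le> card ((S - T) \<union> {t})"
    using p(3) \<open>finite S\<close> by (intro card_mono) auto
  also have "\<dots> \<le> card (S - T) + 1" using card_Un_le[of "S - T" "{t}"] by simp
  also have "card (S - T) = card S - card T"
    using T(1) \<open>finite S\<close> by (simp add: card_Diff_subset finite_subset)
  finally show ?thesis
    using S(2) \<open>psi V E k \<le> card T\<close> card_mono[OF \<open>finite S\<close> T(1)] by linarith
qed

end
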